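(* Let $P=\{p_1<\dots<p_n\}\subset\mathbb{R}$ and let $S'$ be a finite set of intervals of $\mathbb{R}$, all of the same length and with no endpoint in $P$. If every point of $P$ lies in some interval of $S'$ and for every $1\le i<n$ the points $p_i,p_{i+1}$ have different codes $\{s\in S':p\in s\}$, then all points of $P$ have pairwise different codes with respect to $S'$ (so $S'$ is a discriminating code of $P$).
   Context: The code of a point $p$ with respect to a set $S'$ of intervals is $\{s\in S': p\in s\}$. A discriminating code of $P$ is a set of objects such that every point of $P$ has a nonempty code and distinct points have distinct codes. *)

theory Defs
  imports Complex_Main
begin

definition code :: "'a set set \<Rightarrow> 'a \<Rightarrow> 'a set set" where
  "code S p = {s \<in> S. p \<in> s}"

definition discriminating_code :: "'a set set \<Rightarrow> 'a set \<Rightarrow> bool" where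
  "discriminating_code S P \<longleftrightarrow>
     (\<forall>p\<in>P. code S p \<noteq> {}) \<and> (\<forall>p\<in>P. \<forall>q\<in>P. p \<noteq> q \<longrightarrow> code S p \<noteq> code S q)"

end

theory Submission
  imports Defs
begin

text \<open>Suppose two points p < q of P had the same code, and let r be the successor of p in P.
  An interval is convex, so every interval containing p and q contains r; as p and r have
  different codes, some interval of S contains r but neither p nor q. It lies strictly
  between p and q, so its length is less than q - p. On the other hand the common code of
  p and q is nonempty, so an interval of the same length contains both p and q.\<close>

lemma code_inter_subset_code_between:
  fixes S :: "'a::order set set"
  assumes "\<forall>s\<in>S. \<exists>a b. s = {a..b}" and "p \<le> r" and "r \<le> q"
  shows "code S p \<inter> code S q \<subseteq> code S r"
  using assms by (fastforce simp: code_def)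

lemma finite_set_successor:
  fixes P :: "'a::linorder set"
  assumes "finite P" and "p \<in> P" and "q \<in> P" and "p < q"
  obtains r where "r \<in> P" "p < r" "r \<le> q" "\<not> (\<exists>x\<in>P. p < x \<and> x < r)"
proof
  let ?R = "{x \<in> P. p < x \<and> x \<le> q}"
  have "finite ?R" "q \<in> ?R" using assms by auto
  then have "Min ?R \<in> ?R" and Min_le: "\<And>x. x \<in> ?R \<Longrightarrow> Min ?R \<le> x"
    using Min_in by fastforce+
  then show "Min ?R \<in> P" "p < Min ?R" "Min ?R \<le> q" by auto
  show "\<not> (\<exists>x\<in>P. p < x \<and> x < Min ?R)"
    using Min_le \<open>Min ?R \<le> q\<close> by force
qed

lemma interval_strictly_between_shorter:
  fixes a b p q r L :: real
  assumes "r \<in> {a..a + L}" and "p \<notin> {a..a + L}" and "q \<notin> {a..a + L}"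
    and "p < r" and "r < q"
  shows "\<not> (p \<in> {b..b + L} \<and> q \<in> {b..b + L})"
  using assms by auto

lemma code_neq_of_successor_codes_neq:
  fixes P :: "real set" and S :: "real set set" and L :: real
  assumes "finite P"
    and intervals: "\<forall>s\<in>S. \<exists>a. s = {a..a + L}"
    and nonempty: "\<forall>p\<in>P. code S p \<noteq> {}"
    and consecutive: "\<forall>p\<in>P. \<forall>q\<in>P. p < q \<and> \<not> (\<exists>r\<in>P. p < r \<and> r < q) \<longrightarrow> code S p \<noteq> code S q"
    and "p \<in> P" and "q \<in> P" and "p < q"
  shows "code S p \<noteq> code S q"
proof
  assume same: "code S p = code S q"
  obtain r where "r \<in> P" "p < r" "r \<le> q" and no_between: "\<not> (\<exists>x\<in>P. p < x \<and> x < r)"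
    using finite_set_successor assms(1,5-7) by blast
  have "\<forall>s\<in>S. \<exists>a b. s = {a..b}" using intervals by blast
  then have "code S p \<subseteq> code S r"
    using code_inter_subset_code_between[of S p r q] same \<open>p < r\<close> \<open>r \<le> q\<close> by auto
  moreover have "code S p \<noteq> code S r"
    using consecutive \<open>p \<in> P\<close> \<open>r \<in> P\<close> \<open>p < r\<close> no_between by blast
  ultimately obtain s where "s \<in> S" "r \<in> s" "p \<notin> s" "q \<notin> s"
    using same by (auto simp: code_def)
  then obtain a where s: "s = {a..a + L}" using intervals by blast
  with \<open>r \<in> s\<close> \<open>q \<notin> s\<close> \<open>r \<le> q\<close> have "r < q" by auto
  obtain t where "t \<in> S" "p \<in> t" "q \<in> t"
    using nonempty \<open>p \<in> P\<close> same by (force simp: code_def)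
  then obtain b where "t = {b..b + L}" using intervals by blast
  then show False
    using interval_strictly_between_shorter \<open>r \<in> s\<close> \<open>p \<notin> s\<close> \<open>q \<notin> s\<close> \<open>p < r\<close> \<open>r < q\<close>
      \<open>p \<in> t\<close> \<open>q \<in> t\<close> s by blast
qed

theorem mainTheorem8:
  fixes P :: "real set" and S :: "real set set" and L :: real
  assumes "finite P"
    and "finite S"
    and "\<forall>s\<in>S. \<exists>a. s = {a..a + L} \<and> a \<notin> P \<and> a + L \<notin> P"
    and "\<forall>p\<in>P. code S p \<noteq> {}"
    and "\<forall>p\<in>P. \<forall>q\<in>P. p < q \<and> \<not> (\<exists>r\<in>P. p < r \<and> r < q) \<longrightarrow> code S p \<noteq> code S q"
  shows "discriminating_code S P"
proof -
  have intervals: "\<forall>s\<in>S. \<exists>a. s = {a..a + L}" using assms(3) by blast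
  have "code S p \<noteq> code S q" if "p \<in> P" "q \<in> P" "p < q" for p q
    using code_neq_of_successor_codes_neq[OF assms(1) intervals assms(4,5) that] .
  then have "code S p \<noteq> code S q" if "p \<in> P" "q \<in> P" "p \<noteq> q" for p q
    using that by (metis linorder_neq_iff)
  then show ?thesis
    using assms(4) by (simp add: discriminating_code_def)
qed

end
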